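(* Let $\bar{\mathbb{P}}\in\mathcal{M}_1$ and let $\alpha$ be of the form $\alpha(Q)=\widetilde\alpha(Q)$ for $Q\in\mathcal{Q}^{\bar{\mathbb{P}}}$ and $\alpha(Q)=+\infty$ for $Q\in\mathcal{M}_1\setminus\mathcal{Q}^{\bar{\mathbb{P}}}$, where $\mathcal{Q}^{\bar{\mathbb{P}}}$ is a weak-$*$-closed subset of $\mathcal{P}^{\bar{\mathbb{P}}}$, $\widetilde\alpha(Q)<\infty$ for all $Q\in\mathcal{Q}^{\bar{\mathbb{P}}}$ and $\inf_{Q\in\mathcal{Q}^{\bar{\mathbb{P}}}}\widetilde\alpha(Q)>-\infty$. Then for every $P\in\mathcal{M}_1$ satisfying either $\bar{\mathbb{P}}\ll P$ or $\bar{\mathbb{P}}\perp P$ we have $C^P=\widehat C^P$ and $\rho^P=\widehat\rho^P=\widetilde\rho^P$, i.e. for all $X\in L^\infty(P)$ $$\sup_{Q\in\mathcal{Q}^{\bar{\mathbb{P}}}}\inf_{\{\widetilde X\in\mathcal{X}:P(\widetilde X=X)=1\}}\{\mathbb{E}_Q[-\widetilde X]-\widetilde\alpha(Q)\}=\inf_{\{\widetilde X\in\mathcal{X}:P(\widetilde X=X)=1\}}\sup_{Q\in\mathcal{Q}^{\bar{\mathbb{P}}}}\{\mathbb{E}_Q[-\widetilde X]-\widetilde\alpha(Q)\}=\rho^P(X).$$ In particular, if $\bar{\mathbb{P}}\ll P$ then the restriction of $\rho^P=\widehat\rho^P=\widetilde\rho^P$ to $\mathcal{X}$ equals $\rho$,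 and if $\bar{\mathbb{P}}\perp P$ then $\rho^P=\widehat\rho^P=\widetilde\rho^P\equiv-\infty$. Moreover, for all $P\in\mathcal{M}_1$, $$\widehat\rho^P|_{\mathcal{X}}\le\rho^P|_{\mathcal{X}}\le\rho=\rho^{\bar{\mathbb{P}}}|_{\mathcal{X}}=\widehat\rho^{\bar{\mathbb{P}}}|_{\mathcal{X}},$$ and $\widehat\rho^P\le\rho^P\le\rho^{\bar{\mathbb{P}}}=\widehat\rho^{\bar{\mathbb{P}}}$ on $L^\infty(P)\cap L^\infty(\bar{\mathbb{P}})$.
   Context: $(\Omega,\mathcal{F})$ is a measurable space, $\mathcal{M}_1$ the set of probability measures on it endowed with the topology of weak (weak-$*$) convergence, $\mathcal{X}$ the space of pointwise bounded $\mathcal{F}$-measurable real functions, $L^\infty(P)=L^\infty(\Omega,\mathcal{F},P)$, $\mathcal{P}^P=\{Q\in\mathcal{M}_1:Q\ll P\}$. With $\alpha$ as in the claim, $\rho(X):=\sup_{Q\in\mathcal{M}_1}\{\mathbb{E}_Q[-X]-\alpha(Q)\}$ for $X\in\mathcal{X}$ (assumed real-valued). For $P\in\mathcal{M}_1$ and $X\in L^\infty(P)$: $\rho^P(X)=\inf_{\{\widetilde X\in\mathcal{X}:P(\widetilde X=X)=1\}}\rho(\widetilde X)$; $\widehat\rho^P(X)=\sup_{Q\in\mathcal{P}^P}\{\mathbb{E}_Q[-X]-\alpha(Q)\}$; $\widetilde\rho^P(X)=\sup_{Q\in\mathcal{M}_1}\inf_{\{\widetilde X\in\mathcal{X}:P(\widetilde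 X=X)=1\}}\{\mathbb{E}_Q[-\widetilde X]-\alpha(Q)\}$; $C^P=\{X\in L^\infty(P):\rho^P(X)\le0\}$, $\widehat C^P=\{X\in L^\infty(P):\widehat\rho^P(X)\le0\}$. *)

theory Defs
  imports "HOL-Probability.Probability"
begin

text \<open>The measurable space (Omega, F) is represented by a measure M; only
  space M and sets M are used.\<close>

definition M1 :: "'a measure \<Rightarrow> 'a measure set" where
  "M1 M = {Q. prob_space Q \<and> sets Q = sets M}"

definition bdd_meas :: "'a measure \<Rightarrow> ('a \<Rightarrow> real) set" where
  "bdd_meas M = {X. X \<in> borel_measurable M \<and> (\<exists>c. \<forall>\<omega>\<in>space M. \<bar>X \<omega>\<bar> \<le> c)}"

text \<open>L-infinity(P), represented by measurable, P-essentially bounded functions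
  (all notions below only depend on the P-a.s. class).\<close>
definition Linf :: "'a measure \<Rightarrow> ('a \<Rightarrow> real) set" where
  "Linf P = {X. X \<in> borel_measurable P \<and> (\<exists>c. AE \<omega> in P. \<bar>X \<omega>\<bar> \<le> c)}"

definition mut_singular :: "'a measure \<Rightarrow> 'a measure \<Rightarrow> bool" where
  "mut_singular P Q \<longleftrightarrow> (\<exists>A\<in>sets P. emeasure P A = 0 \<and> emeasure Q (space Q - A) = 0)"

definition weak_star_top :: "'a measure \<Rightarrow> 'a measure topology" where
  "weak_star_top M = topology_generated_by
     {{Q \<in> M1 M. integral\<^sup>L Q X \<in> U} | X U. X \<in> bdd_meas M \<and> open U}"

definition rho :: "'a measure \<Rightarrow> ('a measure \<Rightarrow> ereal) \<Rightarrow> ('a \<Rightarrow> real) \<Rightarrow> ereal" where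
  "rho M \<alpha> X = (SUP Q\<in>M1 M. ereal (integral\<^sup>L Q (\<lambda>\<omega>. - X \<omega>)) - \<alpha> Q)"

definition reps :: "'a measure \<Rightarrow> 'a measure \<Rightarrow> ('a \<Rightarrow> real) \<Rightarrow> ('a \<Rightarrow> real) set" where
  "reps M P X = {Xt \<in> bdd_meas M. AE \<omega> in P. Xt \<omega> = X \<omega>}"

definition rhoP :: "'a measure \<Rightarrow> ('a measure \<Rightarrow> ereal) \<Rightarrow> 'a measure \<Rightarrow> ('a \<Rightarrow> real) \<Rightarrow> ereal" where
  "rhoP M \<alpha> P X = (INF Xt\<in>reps M P X. rho M \<alpha> Xt)"

definition rho_hat :: "'a measure \<Rightarrow> ('a measure \<Rightarrow> ereal) \<Rightarrow> 'a measure \<Rightarrow> ('a \<Rightarrow> real) \<Rightarrow> ereal" where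
  "rho_hat M \<alpha> P X = (SUP Q\<in>{Q \<in> M1 M. absolutely_continuous P Q}.
                          ereal (integral\<^sup>L Q (\<lambda>\<omega>. - X \<omega>)) - \<alpha> Q)"

definition rho_tilde :: "'a measure \<Rightarrow> ('a measure \<Rightarrow> ereal) \<Rightarrow> 'a measure \<Rightarrow> ('a \<Rightarrow> real) \<Rightarrow> ereal" where
  "rho_tilde M \<alpha> P X = (SUP Q\<in>M1 M. INF Xt\<in>reps M P X.
                          ereal (integral\<^sup>L Q (\<lambda>\<omega>. - Xt \<omega>)) - \<alpha> Q)"

definition accP :: "'a measure \<Rightarrow> ('a measure \<Rightarrow> ereal) \<Rightarrow> 'a measure \<Rightarrow> ('a \<Rightarrow> real) set" where
  "accP M \<alpha> P = {X \<in> Linf P. rhoP M \<alpha> P X \<le> 0}"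

definition accP_hat :: "'a measure \<Rightarrow> ('a measure \<Rightarrow> ereal) \<Rightarrow> 'a measure \<Rightarrow> ('a \<Rightarrow> real) set" where
  "accP_hat M \<alpha> P = {X \<in> Linf P. rho_hat M \<alpha> P X \<le> 0}"

end

theory Submission
  imports Defs
begin

text \<open>If \<open>Pbar \<ll> P\<close>, then every \<open>Q \<in> Qset\<close> is absolutely continuous with respect to \<open>P\<close>,
  so \<open>E\<^sub>Q[-X]\<close> does not depend on the representative of the \<open>P\<close>-class of \<open>X\<close>; all the
  versions of \<open>\<rho>\<^sup>P\<close> then collapse to the supremum over \<open>Qset\<close> evaluated at \<open>X\<close> itself.
  If \<open>Pbar \<bottom> P\<close>, say \<open>Pbar(A) = 0 = P(A\<^sup>c)\<close>, then adding \<open>n\<close> on \<open>A\<^sup>c\<close> leaves the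
  \<open>P\<close>-class of \<open>X\<close> unchanged but lowers every \<open>E\<^sub>Q[-X]\<close>, \<open>Q \<ll> Pbar\<close>, by \<open>n\<close>; since \<open>\<rho>\<close> is
  real-valued this forces \<open>\<rho>\<^sup>P(X) = -\<infinity>\<close>, and no \<open>Q \<in> Qset\<close> is absolutely continuous
  with respect to \<open>P\<close>, so \<open>hat \<rho>\<^sup>P(X) = -\<infinity>\<close> as well.\<close>

lemma M1_D:
  assumes "Q \<in> M1 M"
  shows "prob_space Q" "sets Q = sets M" "space Q = space M"
  using assms sets_eq_imp_space_eq unfolding M1_def by auto

lemma borel_measurable_M1:
  assumes "Q \<in> M1 M"
  shows "borel_measurable Q = borel_measurable M"
  using M1_D(2)[OF assms] by (intro measurable_cong_sets) simp_all

lemma integrable_bdd_meas: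
  assumes "Q \<in> M1 M" "X \<in> bdd_meas M"
  shows "integrable Q X"
proof -
  from assms(2) obtain c where "X \<in> borel_measurable M" "\<forall>\<omega>\<in>space M. \<bar>X \<omega>\<bar> \<le> c"
    unfolding bdd_meas_def by auto
  then show ?thesis
    using M1_D[OF assms(1)] borel_measurable_M1[OF assms(1)]
    by (intro finite_measure.integrable_const_bound[of Q X c]) (auto simp: prob_space_def)
qed

lemma integral_cong_AE_abs_cont:
  assumes "sets Q = sets P" "absolutely_continuous P Q"
    and "f \<in> borel_measurable P" "g \<in> borel_measurable P" "AE x in P. f x = g x"
  shows "integral\<^sup>L Q f = integral\<^sup>L Q g"
proof (rule integral_cong_AE)
  show "AE x in Q. f x = g x"
    using absolutely_continuous_AE[OF assms(1,2,5)] .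
qed (use assms(1,3,4) measurable_cong_sets[OF assms(1) refl] in auto)

lemma absolutely_continuous_refl: "absolutely_continuous P P"
  by (simp add: absolutely_continuous_def)

lemma SUP_drop_bot:
  fixes f :: "'b \<Rightarrow> 'c::complete_lattice"
  assumes "\<And>x. x \<in> S - T \<Longrightarrow> f x = bot"
  shows "(SUP x\<in>S. f x) = (SUP x\<in>S \<inter> T. f x)"
proof -
  have "S = (S \<inter> T) \<union> (S - T)" by blast
  then have "(SUP x\<in>S. f x) = sup (SUP x\<in>S \<inter> T. f x) (SUP x\<in>S - T. f x)"
    by (metis SUP_union)
  then show ?thesis using assms by simp
qed

lemma SUP_INF_le_INF_SUP:
  fixes f :: "'b \<Rightarrow> 'c \<Rightarrow> 'd::complete_lattice"
  shows "(SUP x\<in>A. INF y\<in>B. f x y) \<le> (INF y\<in>B. SUP x\<in>A. f x y)"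
  by (intro SUP_least INF_greatest) (meson INF_lower2 SUP_upper)

lemma ereal_eq_minf_if_le_minus_nat:
  fixes w :: ereal
  assumes "\<And>n::nat. w \<le> ereal (r - real n)"
  shows "w = -\<infinity>"
proof (rule ereal_bot)
  fix B
  have "r - real (nat \<lceil>r - B\<rceil>) \<le> B" by linarith
  then show "w \<le> ereal B" using assms[of "nat \<lceil>r - B\<rceil>"] order_trans by fastforce
qed

lemma reps_D:
  assumes "Xt \<in> reps M P X"
  shows "Xt \<in> bdd_meas M" "Xt \<in> borel_measurable M" "AE \<omega> in P. Xt \<omega> = X \<omega>"
  using assms unfolding reps_def bdd_meas_def by auto

lemma bdd_meas_in_reps: "X \<in> bdd_meas M \<Longrightarrow> X \<in> reps M P X"
  unfolding reps_def by simp

lemma bdd_meas_in_Linf: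
  assumes "X \<in> bdd_meas M" "P \<in> M1 M"
  shows "X \<in> Linf P"
proof -
  from assms(1) obtain c where "X \<in> borel_measurable M" "\<forall>\<omega>\<in>space M. \<bar>X \<omega>\<bar> \<le> c"
    unfolding bdd_meas_def by auto
  then show ?thesis
    using M1_D(3)[OF assms(2)] borel_measurable_M1[OF assms(2)] unfolding Linf_def
    by (auto intro!: AE_I2 exI[of _ c])
qed

lemma Linf_M1_E:
  assumes "P \<in> M1 M" "X \<in> Linf P"
  obtains c where "X \<in> borel_measurable M" "AE \<omega> in P. \<bar>X \<omega>\<bar> \<le> c"
  using assms borel_measurable_M1[OF assms(1)] unfolding Linf_def by auto

lemma Linf_borel_measurable_M1: "P \<in> M1 M \<Longrightarrow> X \<in> Linf P \<Longrightarrow> X \<in> borel_measurable M"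
  by (erule Linf_M1_E)

lemma truncation_in_reps:
  assumes "X \<in> borel_measurable M" "AE \<omega> in P. \<bar>X \<omega>\<bar> \<le> c"
  shows "(\<lambda>\<omega>. if \<bar>X \<omega>\<bar> \<le> c then X \<omega> else 0) \<in> reps M P X"
proof -
  have "(\<lambda>\<omega>. if \<bar>X \<omega>\<bar> \<le> c then X \<omega> else 0) \<in> borel_measurable M"
    using assms(1) by measurable
  moreover have "\<forall>\<omega>\<in>space M. \<bar>if \<bar>X \<omega>\<bar> \<le> c then X \<omega> else 0\<bar> \<le> \<bar>c\<bar>" by auto
  moreover have "AE \<omega> in P. (if \<bar>X \<omega>\<bar> \<le> c then X \<omega> else 0) = X \<omega>"
    using assms(2) by eventually_elim auto
  ultimately show ?thesis unfolding reps_def bdd_meas_def by blast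
qed

lemma common_rep:
  assumes "P \<in> M1 M" "P' \<in> M1 M" "X \<in> Linf P" "X \<in> Linf P'"
  obtains Xt where "Xt \<in> reps M P X" "Xt \<in> reps M P' X"
proof -
  obtain c where X: "X \<in> borel_measurable M" and c: "AE \<omega> in P. \<bar>X \<omega>\<bar> \<le> c"
    using Linf_M1_E[OF assms(1,3)] .
  obtain c' where c': "AE \<omega> in P'. \<bar>X \<omega>\<bar> \<le> c'"
    using Linf_M1_E[OF assms(2,4)] .
  have "AE \<omega> in P. \<bar>X \<omega>\<bar> \<le> max c c'"
    using c by eventually_elim simp
  moreover have "AE \<omega> in P'. \<bar>X \<omega>\<bar> \<le> max c c'"
    using c' by eventually_elim simp
  ultimately show ?thesis using that truncation_in_reps[OF X] by blast
qed

lemma reps_nonempty: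
  assumes "P \<in> M1 M" "X \<in> Linf P"
  shows "reps M P X \<noteq> {}"
  using common_rep[OF assms(1,1,2,2)] by blast

lemma integral_reps_abs_cont:
  assumes "P \<in> M1 M" "Q \<in> M1 M" "absolutely_continuous P Q"
    and "X \<in> borel_measurable M" "Xt \<in> reps M P X"
  shows "integral\<^sup>L Q (\<lambda>\<omega>. - Xt \<omega>) = integral\<^sup>L Q (\<lambda>\<omega>. - X \<omega>)"
  using reps_D[OF assms(5)] assms(4) M1_D(2)[OF assms(1)] M1_D(2)[OF assms(2)]
    borel_measurable_M1[OF assms(1)]
  by (intro integral_cong_AE_abs_cont[OF _ assms(3)]) auto

lemma rho_hat_le_rhoP:
  assumes "P \<in> M1 M" "X \<in> Linf P"
  shows "rho_hat M \<alpha> P X \<le> rhoP M \<alpha> P X"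
  unfolding rhoP_def rho_hat_def rho_def
proof (intro INF_greatest SUP_least)
  fix Xt Q assume Xt: "Xt \<in> reps M P X" and Q: "Q \<in> {Q \<in> M1 M. absolutely_continuous P Q}"
  have "integral\<^sup>L Q (\<lambda>\<omega>. - X \<omega>) = integral\<^sup>L Q (\<lambda>\<omega>. - Xt \<omega>)"
    using integral_reps_abs_cont[OF assms(1) _ _ Linf_borel_measurable_M1[OF assms] Xt] Q by simp
  then show "ereal (integral\<^sup>L Q (\<lambda>\<omega>. - X \<omega>)) - \<alpha> Q
      \<le> (SUP Q\<in>M1 M. ereal (integral\<^sup>L Q (\<lambda>\<omega>. - Xt \<omega>)) - \<alpha> Q)"
    using Q by (auto intro: SUP_upper)
qed

lemma reps_add_on_null:
  assumes "P \<in> M1 M" "Xt \<in> reps M P X" "A \<in> sets M" "emeasure P (space M - A) = 0"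
  shows "(\<lambda>\<omega>. Xt \<omega> + c * indicator (space M - A) \<omega>) \<in> reps M P X"
proof -
  obtain b where b: "\<forall>\<omega>\<in>space M. \<bar>Xt \<omega>\<bar> \<le> b"
    using reps_D(1)[OF assms(2)] unfolding bdd_meas_def by auto
  have "space M - A \<in> null_sets P"
    using assms(3,4) M1_D(2,3)[OF assms(1)] by (auto intro: null_setsI)
  then have "AE \<omega> in P. \<omega> \<notin> space M - A" by (rule AE_not_in)
  then have "AE \<omega> in P. Xt \<omega> + c * indicator (space M - A) \<omega> = X \<omega>"
    using reps_D(3)[OF assms(2)] by eventually_elim simp
  moreover have "\<forall>\<omega>\<in>space M. \<bar>Xt \<omega> + c * indicator (space M - A) \<omega>\<bar> \<le> b + \<bar>c\<bar>"
    using b by (auto simp: indicator_def)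
  moreover have "(\<lambda>\<omega>. Xt \<omega> + c * indicator (space M - A) \<omega>) \<in> borel_measurable M"
    using reps_D(2)[OF assms(2)] assms(3) by measurable
  ultimately show ?thesis unfolding reps_def bdd_meas_def by blast
qed

lemma mut_singular_M1_E:
  assumes "mut_singular P1 P2" "P1 \<in> M1 M" "P2 \<in> M1 M"
  obtains A where "A \<in> sets M" "emeasure P1 A = 0" "emeasure P2 (space M - A) = 0"
  using assms M1_D(2,3) unfolding mut_singular_def by metis

lemma mut_singular_not_abs_cont_both:
  assumes "mut_singular P1 P2" "P1 \<in> M1 M" "P2 \<in> M1 M" "Q \<in> M1 M"
    and "absolutely_continuous P1 Q" "absolutely_continuous P2 Q"
  shows False
proof -
  obtain A where A: "A \<in> sets M" "emeasure P1 A = 0" "emeasure P2 (space M - A) = 0"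
    using mut_singular_M1_E[OF assms(1-3)] .
  have "A \<in> null_sets P1" "space M - A \<in> null_sets P2"
    using A M1_D(2)[OF assms(2)] M1_D(2)[OF assms(3)] by (auto intro: null_setsI)
  then have "A \<in> null_sets Q" "space M - A \<in> null_sets Q"
    using assms(5,6) unfolding absolutely_continuous_def by auto
  then have "A \<union> (space M - A) \<in> null_sets Q" by blast
  moreover have "A \<union> (space M - A) = space Q"
    using A(1) sets.sets_into_space M1_D(3)[OF assms(4)] by auto
  ultimately show False
    using prob_space.emeasure_space_1[OF M1_D(1)[OF assms(4)]] by (metis null_setsD1 zero_neq_one)
qed

locale restricted_penalty =
  fixes M Pbar :: "'a measure" and Qset :: "'a measure set"
    and \<alpha>t :: "'a measure \<Rightarrow> real" and \<alpha> :: "'a measure \<Rightarrow> ereal"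
  assumes Pbar: "Pbar \<in> M1 M"
    and Qset_sub: "Qset \<subseteq> {Q \<in> M1 M. absolutely_continuous Pbar Q}"
    and \<alpha>_def: "\<And>Q. \<alpha> Q = (if Q \<in> Qset then ereal (\<alpha>t Q) else \<infinity>)"
begin

definition rho_Qset :: "('a \<Rightarrow> real) \<Rightarrow> ereal" where
  "rho_Qset X = (SUP Q\<in>Qset. ereal (integral\<^sup>L Q (\<lambda>\<omega>. - X \<omega>)) - ereal (\<alpha>t Q))"

lemma Qset_M1: "Q \<in> Qset \<Longrightarrow> Q \<in> M1 M"
  using Qset_sub by auto

lemma Qset_abs_cont: "Q \<in> Qset \<Longrightarrow> absolutely_continuous Pbar Q"
  using Qset_sub by auto

lemma SUP_minus_\<alpha>:
  "(SUP Q\<in>S. ereal (F Q) - \<alpha> Q) = (SUP Q\<in>S \<inter> Qset. ereal (F Q) - ereal (\<alpha>t Q))"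
proof -
  have "(SUP Q\<in>S. ereal (F Q) - \<alpha> Q) = (SUP Q\<in>S \<inter> Qset. ereal (F Q) - \<alpha> Q)"
    by (rule SUP_drop_bot) (simp add: \<alpha>_def bot_ereal_def)
  then show ?thesis by (simp add: \<alpha>_def)
qed

lemma SUP_INF_minus_\<alpha>:
  assumes "R \<noteq> {}"
  shows "(SUP Q\<in>S. INF x\<in>R. ereal (F Q x) - \<alpha> Q)
    = (SUP Q\<in>S \<inter> Qset. INF x\<in>R. ereal (F Q x) - ereal (\<alpha>t Q))"
proof -
  have "(SUP Q\<in>S. INF x\<in>R. ereal (F Q x) - \<alpha> Q) = (SUP Q\<in>S \<inter> Qset. INF x\<in>R. ereal (F Q x) - \<alpha> Q)"
    by (rule SUP_drop_bot) (simp add: \<alpha>_def assms bot_ereal_def)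
  then show ?thesis by (simp add: \<alpha>_def)
qed

lemma rho_eq_rho_Qset: "rho M \<alpha> X = rho_Qset X"
  unfolding rho_def rho_Qset_def SUP_minus_\<alpha> using Qset_M1 by (simp add: Int_absorb1 subsetI)

lemma rhoP_eq_INF_rho_Qset: "rhoP M \<alpha> P X = (INF Xt\<in>reps M P X. rho_Qset Xt)"
  unfolding rhoP_def rho_eq_rho_Qset ..

lemma rho_hat_eq_SUP_abs_cont:
  "rho_hat M \<alpha> P X = (SUP Q\<in>{Q \<in> Qset. absolutely_continuous P Q}.
     ereal (integral\<^sup>L Q (\<lambda>\<omega>. - X \<omega>)) - ereal (\<alpha>t Q))"
proof -
  have "{Q \<in> M1 M. absolutely_continuous P Q} \<inter> Qset = {Q \<in> Qset. absolutely_continuous P Q}"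
    using Qset_M1 by blast
  then show ?thesis unfolding rho_hat_def SUP_minus_\<alpha> by simp
qed

lemma rho_tilde_eq_SUP_INF:
  assumes "reps M P X \<noteq> {}"
  shows "rho_tilde M \<alpha> P X = (SUP Q\<in>Qset. INF Xt\<in>reps M P X.
     ereal (integral\<^sup>L Q (\<lambda>\<omega>. - Xt \<omega>)) - ereal (\<alpha>t Q))"
  unfolding rho_tilde_def SUP_INF_minus_\<alpha>[OF assms] using Qset_M1 by (simp add: Int_absorb1 subsetI)

lemma rho_Qset_cong_AE:
  assumes "Y \<in> borel_measurable M" "Z \<in> borel_measurable M" "AE \<omega> in Pbar. Y \<omega> = Z \<omega>"
  shows "rho_Qset Y = rho_Qset Z"
  unfolding rho_Qset_def
proof (intro SUP_cong refl arg_cong2[where f = "(-)"] arg_cong[where f = ereal])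
  fix Q assume "Q \<in> Qset"
  then show "integral\<^sup>L Q (\<lambda>\<omega>. - Y \<omega>) = integral\<^sup>L Q (\<lambda>\<omega>. - Z \<omega>)"
    using assms Qset_abs_cont M1_D(2)[OF Pbar] M1_D(2)[OF Qset_M1] borel_measurable_M1[OF Pbar]
    by (intro integral_cong_AE_abs_cont) auto
qed

lemma rho_Qset_add_const:
  assumes "Y \<in> bdd_meas M"
  shows "rho_Qset (\<lambda>\<omega>. Y \<omega> + c) = rho_Qset Y - ereal c"
proof (cases "Qset = {}")
  case False
  have "integral\<^sup>L Q (\<lambda>\<omega>. - (Y \<omega> + c)) = integral\<^sup>L Q (\<lambda>\<omega>. - Y \<omega>) - c" if "Q \<in> Qset" for Q
  proof -
    interpret Q: prob_space Q using M1_D(1)[OF Qset_M1[OF that]] .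
    have "integrable Q Y" using integrable_bdd_meas[OF Qset_M1[OF that] assms] .
    then show ?thesis
      using Bochner_Integration.integral_diff[OF integrable_minus Q.integrable_const, of Y c]
      by (simp add: Q.prob_space)
  qed
  then have "rho_Qset (\<lambda>\<omega>. Y \<omega> + c)
      = (SUP Q\<in>Qset. ereal (integral\<^sup>L Q (\<lambda>\<omega>. - Y \<omega>)) - ereal (\<alpha>t Q) - ereal c)"
    unfolding rho_Qset_def by (intro SUP_cong) (simp_all add: algebra_simps)
  also have "\<dots> = rho_Qset Y - ereal c"
    unfolding rho_Qset_def using False by (intro SUP_ereal_minus_left) simp_all
  finally show ?thesis .
next
  case True
  then show ?thesis unfolding rho_Qset_def by (simp add: bot_ereal_def)
qed

lemma Qset_abs_cont_trans:
  "absolutely_continuous P Pbar \<Longrightarrow> Q \<in> Qset \<Longrightarrow> absolutely_continuous P Q"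
  using Qset_abs_cont unfolding absolutely_continuous_def by blast

lemma rho_Qset_reps_abs_cont:
  assumes "P \<in> M1 M" "absolutely_continuous P Pbar" "X \<in> borel_measurable M" "Xt \<in> reps M P X"
  shows "rho_Qset Xt = rho_Qset X"
proof (rule rho_Qset_cong_AE)
  show "AE \<omega> in Pbar. Xt \<omega> = X \<omega>"
    using absolutely_continuous_AE[OF _ assms(2) reps_D(3)[OF assms(4)]]
      M1_D(2)[OF Pbar] M1_D(2)[OF assms(1)] by simp
qed (use assms reps_D in auto)

lemma rhoP_abs_cont:
  assumes "P \<in> M1 M" "absolutely_continuous P Pbar" "X \<in> Linf P"
  shows "rhoP M \<alpha> P X = rho_Qset X"
  unfolding rhoP_eq_INF_rho_Qset
  using rho_Qset_reps_abs_cont[OF assms(1,2) Linf_borel_measurable_M1[OF assms(1,3)]]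
    reps_nonempty[OF assms(1,3)] by simp

lemma rho_hat_abs_cont:
  assumes "absolutely_continuous P Pbar"
  shows "rho_hat M \<alpha> P X = rho_Qset X"
proof -
  have "{Q \<in> Qset. absolutely_continuous P Q} = Qset"
    using Qset_abs_cont_trans[OF assms] by blast
  then show ?thesis unfolding rho_hat_eq_SUP_abs_cont rho_Qset_def by simp
qed

lemma SUP_INF_abs_cont:
  assumes "P \<in> M1 M" "absolutely_continuous P Pbar" "X \<in> Linf P"
  shows "(SUP Q\<in>Qset. INF Xt\<in>reps M P X.
     ereal (integral\<^sup>L Q (\<lambda>\<omega>. - Xt \<omega>)) - ereal (\<alpha>t Q)) = rho_Qset X"
  unfolding rho_Qset_def
proof (rule SUP_cong[OF refl])
  fix Q assume Q: "Q \<in> Qset"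
  have "integral\<^sup>L Q (\<lambda>\<omega>. - Xt \<omega>) = integral\<^sup>L Q (\<lambda>\<omega>. - X \<omega>)" if "Xt \<in> reps M P X" for Xt
    using integral_reps_abs_cont[OF assms(1) Qset_M1[OF Q] Qset_abs_cont_trans[OF assms(2) Q]
        Linf_borel_measurable_M1[OF assms(1,3)] that] .
  then show "(INF Xt\<in>reps M P X. ereal (integral\<^sup>L Q (\<lambda>\<omega>. - Xt \<omega>)) - ereal (\<alpha>t Q))
      = ereal (integral\<^sup>L Q (\<lambda>\<omega>. - X \<omega>)) - ereal (\<alpha>t Q)"
    using reps_nonempty[OF assms(1,3)] by simp
qed

lemma rhoP_Pbar: "X \<in> Linf Pbar \<Longrightarrow> rhoP M \<alpha> Pbar X = rho_Qset X"
  by (rule rhoP_abs_cont[OF Pbar absolutely_continuous_refl])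

lemma rho_hat_Pbar: "rho_hat M \<alpha> Pbar X = rho_Qset X"
  by (rule rho_hat_abs_cont[OF absolutely_continuous_refl])

lemma rho_hat_singular:
  assumes "P \<in> M1 M" "mut_singular Pbar P"
  shows "rho_hat M \<alpha> P X = -\<infinity>"
proof -
  have no_Q: "{Q \<in> Qset. absolutely_continuous P Q} = {}"
    using mut_singular_not_abs_cont_both[OF assms(2) Pbar assms(1) Qset_M1 Qset_abs_cont] by blast
  show ?thesis unfolding rho_hat_eq_SUP_abs_cont no_Q by (simp add: bot_ereal_def)
qed

lemma rho_Qset_shift_off_Pbar_null:
  assumes "Y \<in> bdd_meas M" "A \<in> sets M" "emeasure Pbar A = 0"
  shows "rho_Qset (\<lambda>\<omega>. Y \<omega> + c * indicator (space M - A) \<omega>) = rho_Qset Y - ereal c"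
proof -
  have Y: "Y \<in> borel_measurable M" using assms(1) unfolding bdd_meas_def by blast
  have A_null: "A \<in> null_sets Pbar" using assms(2,3) M1_D(2)[OF Pbar] by (auto intro: null_setsI)
  have "AE \<omega> in Pbar. Y \<omega> + c * indicator (space M - A) \<omega> = Y \<omega> + c"
    using AE_not_in[OF A_null] AE_space by eventually_elim (simp add: M1_D(3)[OF Pbar])
  moreover have "(\<lambda>\<omega>. Y \<omega> + c * indicator (space M - A) \<omega>) \<in> borel_measurable M"
    using Y assms(2) by measurable
  moreover have "(\<lambda>\<omega>. Y \<omega> + c) \<in> borel_measurable M"
    using Y by measurable
  ultimately have "rho_Qset (\<lambda>\<omega>. Y \<omega> + c * indicator (space M - A) \<omega>) = rho_Qset (\<lambda>\<omega>. Y \<omega> + c)"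
    by (intro rho_Qset_cong_AE)
  then show ?thesis using rho_Qset_add_const[OF assms(1)] by simp
qed

lemma rhoP_singular:
  assumes P: "P \<in> M1 M" and sing: "mut_singular Pbar P" and X: "X \<in> Linf P"
    and rho_real: "\<And>Y. Y \<in> bdd_meas M \<Longrightarrow> \<bar>rho M \<alpha> Y\<bar> \<noteq> \<infinity>"
  shows "rhoP M \<alpha> P X = -\<infinity>"
proof -
  obtain X0 where X0: "X0 \<in> reps M P X" using reps_nonempty[OF P X] by blast
  obtain r where r: "rho_Qset X0 = ereal r"
    using rho_real[OF reps_D(1)[OF X0]] unfolding rho_eq_rho_Qset by (cases "rho_Qset X0") auto
  obtain A where A: "A \<in> sets M" "emeasure Pbar A = 0" "emeasure P (space M - A) = 0"
    using mut_singular_M1_E[OF sing Pbar P] .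
  have "rhoP M \<alpha> P X \<le> ereal (r - real n)" for n :: nat
  proof -
    let ?Xn = "\<lambda>\<omega>. X0 \<omega> + real n * indicator (space M - A) \<omega>"
    have "rhoP M \<alpha> P X \<le> rho_Qset ?Xn"
      unfolding rhoP_eq_INF_rho_Qset using reps_add_on_null[OF P X0 A(1,3)] by (rule INF_lower)
    also have "\<dots> = ereal (r - real n)"
      using rho_Qset_shift_off_Pbar_null[OF reps_D(1)[OF X0] A(1,2)] r by simp
    finally show ?thesis .
  qed
  then show ?thesis by (rule ereal_eq_minf_if_le_minus_nat)
qed

lemma rhoP_le_rhoP_Pbar:
  assumes P: "P \<in> M1 M" and X: "X \<in> Linf P" "X \<in> Linf Pbar"
  shows "rhoP M \<alpha> P X \<le> rhoP M \<alpha> Pbar X"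
proof -
  obtain Xt where Xt: "Xt \<in> reps M P X" "Xt \<in> reps M Pbar X"
    using common_rep[OF P Pbar X] .
  have "rhoP M \<alpha> P X \<le> rho_Qset Xt"
    unfolding rhoP_eq_INF_rho_Qset using Xt(1) by (rule INF_lower)
  also have "\<dots> = rhoP M \<alpha> Pbar X"
    using rho_Qset_reps_abs_cont[OF Pbar absolutely_continuous_refl _ Xt(2)] rhoP_Pbar[OF X(2)]
      Linf_borel_measurable_M1[OF Pbar X(2)] by simp
  finally show ?thesis .
qed

lemma versions_coincide:
  assumes P: "P \<in> M1 M" and "absolutely_continuous P Pbar \<or> mut_singular Pbar P"
    and X: "X \<in> Linf P" and rho_real: "\<And>Y. Y \<in> bdd_meas M \<Longrightarrow> \<bar>rho M \<alpha> Y\<bar> \<noteq> \<infinity>"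
  shows "rho_hat M \<alpha> P X = rhoP M \<alpha> P X" and "rho_tilde M \<alpha> P X = rhoP M \<alpha> P X"
    and "(SUP Q\<in>Qset. INF Xt\<in>reps M P X.
      ereal (integral\<^sup>L Q (\<lambda>\<omega>. - Xt \<omega>)) - ereal (\<alpha>t Q)) = rhoP M \<alpha> P X"
proof -
  have "rho_hat M \<alpha> P X = rhoP M \<alpha> P X \<and> (SUP Q\<in>Qset. INF Xt\<in>reps M P X.
      ereal (integral\<^sup>L Q (\<lambda>\<omega>. - Xt \<omega>)) - ereal (\<alpha>t Q)) = rhoP M \<alpha> P X"
    using assms(2)
  proof
    assume "absolutely_continuous P Pbar"
    then show ?thesis using rhoP_abs_cont rho_hat_abs_cont SUP_INF_abs_cont P X by simp
  next
    assume sing: "mut_singular Pbar P"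
    have "(SUP Q\<in>Qset. INF Xt\<in>reps M P X.
        ereal (integral\<^sup>L Q (\<lambda>\<omega>. - Xt \<omega>)) - ereal (\<alpha>t Q)) \<le> rhoP M \<alpha> P X"
      unfolding rhoP_eq_INF_rho_Qset rho_Qset_def by (rule SUP_INF_le_INF_SUP)
    then show ?thesis using rhoP_singular[OF P sing X rho_real] rho_hat_singular[OF P sing] by simp
  qed
  then show "rho_hat M \<alpha> P X = rhoP M \<alpha> P X" and "(SUP Q\<in>Qset. INF Xt\<in>reps M P X.
      ereal (integral\<^sup>L Q (\<lambda>\<omega>. - Xt \<omega>)) - ereal (\<alpha>t Q)) = rhoP M \<alpha> P X"
    by simp_all
  then show "rho_tilde M \<alpha> P X = rhoP M \<alpha> P X"
    using rho_tilde_eq_SUP_INF[OF reps_nonempty[OF P X]] by simp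
qed

end

theorem proposition3p10:
  fixes M :: "'a measure" and Pbar :: "'a measure"
    and Qset :: "'a measure set" and \<alpha>t :: "'a measure \<Rightarrow> real"
    and \<alpha> :: "'a measure \<Rightarrow> ereal"
  assumes Pbar: "Pbar \<in> M1 M"
    and Qsub: "Qset \<subseteq> {Q \<in> M1 M. absolutely_continuous Pbar Q}"
    and Qclosed: "closedin (weak_star_top M) Qset"
    and \<alpha>t_bdd: "\<exists>c. \<forall>Q\<in>Qset. c \<le> \<alpha>t Q"
    and \<alpha>_def: "\<And>Q. \<alpha> Q = (if Q \<in> Qset then ereal (\<alpha>t Q) else \<infinity>)"
    and rho_real: "\<And>X. X \<in> bdd_meas M \<Longrightarrow> \<bar>rho M \<alpha> X\<bar> \<noteq> \<infinity>"
  shows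
    "(\<forall>P\<in>M1 M. (absolutely_continuous P Pbar \<or> mut_singular Pbar P) \<longrightarrow>
        accP M \<alpha> P = accP_hat M \<alpha> P \<and>
        (\<forall>X\<in>Linf P.
           rhoP M \<alpha> P X = rho_hat M \<alpha> P X \<and> rho_hat M \<alpha> P X = rho_tilde M \<alpha> P X \<and>
           (SUP Q\<in>Qset. INF Xt\<in>reps M P X.
               ereal (integral\<^sup>L Q (\<lambda>\<omega>. - Xt \<omega>)) - ereal (\<alpha>t Q))
             = (INF Xt\<in>reps M P X. SUP Q\<in>Qset.
               ereal (integral\<^sup>L Q (\<lambda>\<omega>. - Xt \<omega>)) - ereal (\<alpha>t Q)) \<and>
           (INF Xt\<in>reps M P X. SUP Q\<in>Qset.
               ereal (integral\<^sup>L Q (\<lambda>\<omega>. - Xt \<omega>)) - ereal (\<alpha>t Q))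
             = rhoP M \<alpha> P X))
     \<and> (\<forall>P\<in>M1 M. absolutely_continuous P Pbar \<longrightarrow>
          (\<forall>X\<in>bdd_meas M. rhoP M \<alpha> P X = rho M \<alpha> X))
     \<and> (\<forall>P\<in>M1 M. mut_singular Pbar P \<longrightarrow>
          (\<forall>X\<in>Linf P. rhoP M \<alpha> P X = -\<infinity>))
     \<and> (\<forall>P\<in>M1 M. \<forall>X\<in>bdd_meas M.
          rho_hat M \<alpha> P X \<le> rhoP M \<alpha> P X \<and> rhoP M \<alpha> P X \<le> rho M \<alpha> X \<and>
          rho M \<alpha> X = rhoP M \<alpha> Pbar X \<and> rhoP M \<alpha> Pbar X = rho_hat M \<alpha> Pbar X)
     \<and> (\<forall>P\<in>M1 M. \<forall>X\<in>Linf P \<inter> Linf Pbar.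
          rho_hat M \<alpha> P X \<le> rhoP M \<alpha> P X \<and> rhoP M \<alpha> P X \<le> rhoP M \<alpha> Pbar X \<and>
          rhoP M \<alpha> Pbar X = rho_hat M \<alpha> Pbar X)"
proof -
  interpret restricted_penalty M Pbar Qset \<alpha>t \<alpha>
    using Pbar Qsub \<alpha>_def by unfold_locales
  note coincide = versions_coincide[OF _ _ _ rho_real]
  show ?thesis
  proof (intro conjI ballI impI)
    fix P assume P: "P \<in> M1 M" and dichotomy: "absolutely_continuous P Pbar \<or> mut_singular Pbar P"
    show "accP M \<alpha> P = accP_hat M \<alpha> P"
      unfolding accP_def accP_hat_def using coincide(1)[OF P dichotomy] by auto
    fix X assume "X \<in> Linf P"
    then show "rhoP M \<alpha> P X = rho_hat M \<alpha> P X" "rho_hat M \<alpha> P X = rho_tilde M \<alpha> P X"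
      "(SUP Q\<in>Qset. INF Xt\<in>reps M P X. ereal (integral\<^sup>L Q (\<lambda>\<omega>. - Xt \<omega>)) - ereal (\<alpha>t Q))
        = (INF Xt\<in>reps M P X. SUP Q\<in>Qset. ereal (integral\<^sup>L Q (\<lambda>\<omega>. - Xt \<omega>)) - ereal (\<alpha>t Q))"
      "(INF Xt\<in>reps M P X. SUP Q\<in>Qset. ereal (integral\<^sup>L Q (\<lambda>\<omega>. - Xt \<omega>)) - ereal (\<alpha>t Q))
        = rhoP M \<alpha> P X"
      using coincide[OF P dichotomy] rhoP_eq_INF_rho_Qset[of P X] unfolding rho_Qset_def by simp_all
  next
    fix P X assume "P \<in> M1 M" "absolutely_continuous P Pbar" "X \<in> bdd_meas M"
    then show "rhoP M \<alpha> P X = rho M \<alpha> X"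
      using rhoP_abs_cont bdd_meas_in_Linf rho_eq_rho_Qset by metis
  next
    fix P X assume "P \<in> M1 M" "mut_singular Pbar P" "X \<in> Linf P"
    then show "rhoP M \<alpha> P X = -\<infinity>" by (rule rhoP_singular[OF _ _ _ rho_real])
  next
    fix P X assume P: "P \<in> M1 M" and X: "X \<in> bdd_meas M"
    show "rho_hat M \<alpha> P X \<le> rhoP M \<alpha> P X" using rho_hat_le_rhoP[OF P bdd_meas_in_Linf[OF X P]] .
    show "rhoP M \<alpha> P X \<le> rho M \<alpha> X" unfolding rhoP_def using bdd_meas_in_reps[OF X] by (rule INF_lower)
    show "rho M \<alpha> X = rhoP M \<alpha> Pbar X" "rhoP M \<alpha> Pbar X = rho_hat M \<alpha> Pbar X"
      using rhoP_Pbar[OF bdd_meas_in_Linf[OF X Pbar]] rho_hat_Pbar rho_eq_rho_Qset by simp_all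
  next
    fix P X assume P: "P \<in> M1 M" and "X \<in> Linf P \<inter> Linf Pbar"
    then have X: "X \<in> Linf P" "X \<in> Linf Pbar" by simp_all
    show "rho_hat M \<alpha> P X \<le> rhoP M \<alpha> P X" "rhoP M \<alpha> P X \<le> rhoP M \<alpha> Pbar X"
      "rhoP M \<alpha> Pbar X = rho_hat M \<alpha> Pbar X"
      using rho_hat_le_rhoP[OF P X(1)] rhoP_le_rhoP_Pbar[OF P X] rhoP_Pbar[OF X(2)] rho_hat_Pbar
      by simp_all
  qed
qed

end
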